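(* Let $\alpha>0$. Consider the model $Y_i=f(x_i)+V_i^{1/2}\xi_i$, $i=1,\dots,n$, $x_i=i/n$, with $\xi_1,\dots,\xi_n\overset{iid}{\sim}N(0,1)$. For every $\eta\in(0,1)$ there exists $c_\eta>0$ not depending on $n$ such that for all $0<c<c_\eta$ and all $n$ sufficiently large depending only on $\eta$, $$\inf_\varphi\left\{\sup_{f\in\mathcal{H}_\alpha,\,V\in\Sigma_0}P_{f,V}\{\varphi=1\}+\sup_{f\in\mathcal{H}_\alpha,\,V\in\Sigma_1(cn^{-1/4})}P_{f,V}\{\varphi=0\}\right\}\ge1-\eta,$$ where the infimum is over all tests $\varphi$ (measurable functions of $(Y_1,\dots,Y_n)$ into $\{0,1\}$).
   Context: $\mathcal{H}_\alpha=\mathcal{H}_\alpha(M)$: functions $g:[0,1]\to\mathbb{R}$ with $|g^{(\lfloor\alpha\rfloor)}(x)-g^{(\lfloor\alpha\rfloor)}(y)|\le M|x-y|^{\alpha-\lfloor\alpha\rfloor}$ for all $x,y$ and $\|g^{(k)}\|_\infty\le M$ for $k=0,\dots,\lfloor\alpha\rfloor$; $M$ is a fixed sufficiently large constant. $\Sigma_0=\{V\in[0,M]^n:V_i=\sigma^2\ \forall i,\ \sigma^2\in[0,M]\}$; $\Sigma_1(\varepsilon)=\{V\in[0,M]^n:\sqrt{\frac1n\sum_{i=1}^n(V_i-\bar V_n)^2}\ge\varepsilon\}$, $\bar V_n=\frac1n\sum_iV_i$. $P_{f,V}$ is the law of the data. *)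

theory Defs
  imports "HOL-Probability.Probability"
begin

definition holder_class :: "real \<Rightarrow> real \<Rightarrow> (real \<Rightarrow> real) set" where
  "holder_class \<alpha> M = {g. \<exists>D :: nat \<Rightarrow> real \<Rightarrow> real.
      (\<forall>x\<in>{0..1}. D 0 x = g x) \<and>
      (\<forall>j < nat \<lfloor>\<alpha>\<rfloor>. \<forall>x\<in>{0..1}.
          (D j has_real_derivative D (Suc j) x) (at x within {0..1})) \<and>
      (\<forall>j \<le> nat \<lfloor>\<alpha>\<rfloor>. \<forall>x\<in>{0..1}. \<bar>D j x\<bar> \<le> M) \<and>
      (\<forall>x\<in>{0..1}. \<forall>y\<in>{0..1}.
          \<bar>D (nat \<lfloor>\<alpha>\<rfloor>) x - D (nat \<lfloor>\<alpha>\<rfloor>) y\<bar> \<le> M * \<bar>x - y\<bar> powr (\<alpha> - of_int \<lfloor>\<alpha>\<rfloor>))}"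

definition mean_V :: "nat \<Rightarrow> (nat \<Rightarrow> real) \<Rightarrow> real" where
  "mean_V n V = (\<Sum>i=1..n. V i) / real n"

definition Sigma0 :: "real \<Rightarrow> nat \<Rightarrow> (nat \<Rightarrow> real) set" where
  "Sigma0 M n = {V. (\<forall>i\<in>{1..n}. V i \<in> {0..M}) \<and>
                    (\<exists>s2\<in>{0..M}. \<forall>i\<in>{1..n}. V i = s2)}"

definition Sigma1 :: "real \<Rightarrow> nat \<Rightarrow> real \<Rightarrow> (nat \<Rightarrow> real) set" where
  "Sigma1 M n \<epsilon> = {V. (\<forall>i\<in>{1..n}. V i \<in> {0..M}) \<and>
        sqrt ((\<Sum>i=1..n. (V i - mean_V n V)\<^sup>2) / real n) \<ge> \<epsilon>}"

definition gauss :: "real \<Rightarrow> real \<Rightarrow> real measure" where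
  "gauss \<mu> v = (if v = 0 then return lborel \<mu> else density lborel (normal_density \<mu> (sqrt v)))"

definition data_law :: "nat \<Rightarrow> (real \<Rightarrow> real) \<Rightarrow> (nat \<Rightarrow> real) \<Rightarrow> (nat \<Rightarrow> real) measure" where
  "data_law n f V = PiM {1..n} (\<lambda>i. gauss (f (real i / real n)) (V i))"

definition is_test :: "nat \<Rightarrow> ((nat \<Rightarrow> real) \<Rightarrow> real) \<Rightarrow> bool" where
  "is_test n \<phi> \<longleftrightarrow> \<phi> \<in> borel_measurable (PiM {1..n} (\<lambda>i. lborel)) \<and>
                    (\<forall>y. \<phi> y \<in> {0, 1})"

definition prob_test :: "nat \<Rightarrow> (real \<Rightarrow> real) \<Rightarrow> (nat \<Rightarrow> real) \<Rightarrow> ((nat \<Rightarrow> real) \<Rightarrow> real) \<Rightarrow> real \<Rightarrow> real" where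
  "prob_test n f V \<phi> b = measure (data_law n f V) {y \<in> space (data_law n f V). \<phi> y = b}"

end

theory Submission
  imports Defs
begin

text \<open>Le Cam's method with a mixture of alternatives. Take \<open>f = 0\<close> throughout, the null
  variances \<open>V = 1\<close>, and, for every sign vector \<open>s \<in> {-1, 1}\<^sup>m\<close> with \<open>m = n div 2\<close>, the
  alternative giving the observations \<open>2k - 1\<close> and \<open>2k\<close> the variances \<open>1 - \<delta> s\<^sub>k\<close> and
  \<open>1 + \<delta> s\<^sub>k\<close>, where \<open>\<delta> = 2 c n\<^sup>-\<^sup>1\<^sup>/\<^sup>4\<close>. These alternatives have average variance 1 and
  empirical standard deviation at least \<open>c n\<^sup>-\<^sup>1\<^sup>/\<^sup>4\<close>.

  For every event \<open>A\<close>, the inequality \<open>\<bar>p - q\<bar> \<le> \<eta> p / 2 + (p - q)\<^sup>2 / (2 \<eta> p)\<close> integrates to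
  \<open>P\<^sub>0(A) \<le> P\<^sub>m\<^sub>i\<^sub>x(A) + \<eta> / 2 + \<chi>\<^sup>2 / (2 \<eta>)\<close>, where \<open>P\<^sub>m\<^sub>i\<^sub>x\<close> is the uniform mixture of
  the alternatives. The chi-square divergence factorises over the coordinates by the Gaussian
  identity \<open>\<integral> \<phi>\<^sub>a \<phi>\<^sub>b / \<phi>\<^sub>1 = (a + b - a b)\<^sup>-\<^sup>1\<^sup>/\<^sup>2\<close>; thanks to the pairing each pair of
  coordinates contributes \<open>(1 - \<delta>\<^sup>2 s\<^sub>k s'\<^sub>k)\<^sup>-\<^sup>1\<close>, and averaging over \<open>s, s'\<close> gives
  \<open>1 + \<chi>\<^sup>2 = (1 - \<delta>\<^sup>4)\<^sup>-\<^sup>m \<le> 1 + 16 c\<^sup>4 \<le> 1 + \<eta>\<^sup>2\<close> once \<open>c \<le> \<surd>\<eta> / 2\<close>. Hence any test errs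
  with probability at least \<open>1 - P\<^sub>0(A) + P\<^sub>m\<^sub>i\<^sub>x(A) \<ge> 1 - \<eta>\<close> in total, \<open>A\<close> being its
  acceptance region.\<close>

section \<open>Centred Gaussian samples\<close>

lemma sets_gauss [simp]: "sets (gauss \<mu> v) = sets lborel"
  by (simp add: gauss_def)

lemma prob_space_gauss: "prob_space (gauss \<mu> v)"
proof (cases "v = 0")
  case False
  then have "prob_space (density lborel (normal_density \<mu> \<bar>sqrt v\<bar>))"
    by (intro prob_space_normal_density) simp
  moreover have "normal_density \<mu> \<bar>sqrt v\<bar> = normal_density \<mu> (sqrt v)"
    by (simp add: normal_density_def [abs_def])
  ultimately show ?thesis
    using False by (simp add: gauss_def)
qed (simp add: gauss_def prob_space_return)

abbreviation lborel_sample :: "nat \<Rightarrow> (nat \<Rightarrow> real) measure" where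
  "lborel_sample n \<equiv> PiM {1..n} (\<lambda>_. lborel)"

lemma sets_data_law: "sets (data_law n f V) = sets (lborel_sample n)"
  unfolding data_law_def by (rule sets_PiM_cong) auto

lemma space_data_law: "space (data_law n f V) = space (lborel_sample n)"
  using sets_data_law by (rule sets_eq_imp_space_eq)

lemma prob_space_data_law: "prob_space (data_law n f V)"
  unfolding data_law_def by (intro prob_space_PiM prob_space_gauss)

lemma PiM_density_eq_density_prod:
  fixes f :: "'i \<Rightarrow> real \<Rightarrow> real"
  assumes fin: "finite I"
    and meas: "\<And>i. i \<in> I \<Longrightarrow> f i \<in> borel_measurable lborel"
    and prob: "\<And>i. i \<in> I \<Longrightarrow> prob_space (density lborel (f i))"
  shows "PiM I (\<lambda>i. density lborel (f i))
       = density (PiM I (\<lambda>_. lborel)) (\<lambda>y. \<Prod>i\<in>I. ennreal (f i (y i)))"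
proof -
  define M where "M i = (if i \<in> I then density lborel (f i) else lborel)" for i
  have sets_M: "sets (M i) = sets lborel" for i
    by (simp add: M_def)
  have "sigma_finite_measure (M i)" for i
    by (auto simp: M_def prob intro: prob_space_imp_sigma_finite lborel.sigma_finite_measure_axioms)
  then interpret M: product_sigma_finite M
    by (simp add: product_sigma_finite_def)
  interpret L: product_sigma_finite "\<lambda>_. lborel :: real measure"
    by (simp add: product_sigma_finite_def lborel.sigma_finite_measure_axioms)
  have [measurable]: "(\<lambda>y. \<Prod>i\<in>I. ennreal (f i (y i))) \<in> borel_measurable (PiM I (\<lambda>_. lborel))"
    using meas by (intro borel_measurable_prod_ennreal) (auto intro!: measurable_compose[OF measurable_component_singleton])
  have "density (PiM I (\<lambda>_. lborel)) (\<lambda>y. \<Prod>i\<in>I. ennreal (f i (y i))) = PiM I M" (is "?D = _")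
  proof (rule M.PiM_eqI[OF fin])
    fix A assume A: "\<And>i. i \<in> I \<Longrightarrow> A i \<in> sets (M i)"
    then have A_sets: "\<And>i. i \<in> I \<Longrightarrow> A i \<in> sets lborel"
      by (simp add: sets_M)
    have "indicator (Pi\<^sub>E I A) y = (\<Prod>i\<in>I. indicator (A i) (y i) :: ennreal)"
      if "y \<in> space (PiM I (\<lambda>_. lborel :: real measure))" for y
      using that fin by (auto simp: space_PiM indicator_def PiE_def Pi_def)
    then have "emeasure ?D (Pi\<^sub>E I A)
        = (\<integral>\<^sup>+ y. (\<Prod>i\<in>I. ennreal (f i (y i)) * indicator (A i) (y i)) \<partial>PiM I (\<lambda>_. lborel))"
      using A_sets fin
      by (auto simp: emeasure_density prod.distrib intro!: sets_PiM_I_finite nn_integral_cong)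
    also have "\<dots> = (\<Prod>i\<in>I. \<integral>\<^sup>+ x. ennreal (f i x) * indicator (A i) x \<partial>lborel)"
      using A_sets meas by (intro L.product_nn_integral_prod fin) auto
    also have "\<dots> = (\<Prod>i\<in>I. emeasure (M i) (A i))"
      using A_sets meas by (intro prod.cong refl) (simp add: M_def emeasure_density)
    finally show "emeasure ?D (Pi\<^sub>E I A) = (\<Prod>i\<in>I. emeasure (M i) (A i))" .
  qed (simp add: sets_M cong: sets_PiM_cong)
  also have "PiM I M = PiM I (\<lambda>i. density lborel (f i))"
    by (rule PiM_cong) (auto simp: M_def)
  finally show ?thesis ..
qed

lemma has_bochner_integral_density_indicator:
  fixes g :: "'a \<Rightarrow> real"
  assumes prob: "prob_space (density M g)" and g: "g \<in> borel_measurable M" "\<And>x. 0 \<le> g x"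
    and A: "A \<in> sets M"
  shows "has_bochner_integral M (\<lambda>x. g x * indicator A x) (measure (density M g) A)"
proof -
  interpret prob_space "density M g" by (rule prob)
  have I: "integrable (density M g) (indicator A :: 'a \<Rightarrow> real)"
    and E: "integral\<^sup>L (density M g) (indicator A) = measure (density M g) A"
    using A by (auto simp: less_top[symmetric])
  have meas: "indicator A \<in> borel_measurable M"
    using A by simp
  have AE: "AE x in M. 0 \<le> g x"
    using g(2) by simp
  show ?thesis
    using I E unfolding has_bochner_integral_iff integrable_density[OF meas g(1) AE]
      integral_density[OF meas g(1) AE] real_scaleR_def by blast
qed

lemma normal_density_mult_divide_standard:
  fixes a b x :: real
  assumes a: "0 < a" and b: "0 < b" and w: "0 < a + b - a * b"
  shows "normal_density 0 (sqrt a) x * normal_density 0 (sqrt b) x / normal_density 0 1 x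
       = normal_density 0 (sqrt (a * b / (a + b - a * b))) x / sqrt (a + b - a * b)"
proof -
  define w where "w = a + b - a * b"
  have w0: "0 < w"
    using w by (simp add: w_def)
  have exponent: "- x\<^sup>2 / (2 * a) + - x\<^sup>2 / (2 * b) - - x\<^sup>2 / 2 = - x\<^sup>2 / (2 * (a * b / w))"
    using a b w0 by (simp add: w_def field_simps)
  have "sqrt (2 * pi * a) * sqrt (2 * pi * b) = sqrt (2 * pi) * (sqrt w * sqrt (2 * pi * (a * b / w)))"
    using w0 by (simp add: real_sqrt_mult [symmetric] ac_simps)
  then have const_factor: "1 / sqrt (2 * pi * a) * (1 / sqrt (2 * pi * b)) / (1 / sqrt (2 * pi))
      = 1 / sqrt (2 * pi * (a * b / w)) / sqrt w"
    using a b w0 by (simp add: field_simps)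
  have exp_factor: "exp (- x\<^sup>2 / (2 * a)) * exp (- x\<^sup>2 / (2 * b)) / exp (- x\<^sup>2 / 2)
      = exp (- x\<^sup>2 / (2 * (a * b / w)))"
    unfolding exponent [symmetric] by (simp add: exp_add [symmetric] exp_diff [symmetric])
  have "normal_density 0 (sqrt a) x * normal_density 0 (sqrt b) x / normal_density 0 1 x
     = (1 / sqrt (2 * pi * a) * (1 / sqrt (2 * pi * b)) / (1 / sqrt (2 * pi)))
       * (exp (- x\<^sup>2 / (2 * a)) * exp (- x\<^sup>2 / (2 * b)) / exp (- x\<^sup>2 / 2))"
    using a b by (simp add: normal_density_def)
  also have "\<dots> = normal_density 0 (sqrt (a * b / w)) x / sqrt w"
    unfolding const_factor exp_factor using a b w0 by (simp add: normal_density_def)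
  finally show ?thesis
    by (simp add: w_def)
qed

lemma nn_integral_normal_density_mult_divide_standard:
  fixes a b :: real
  assumes a: "0 < a" and b: "0 < b" and w: "0 < a + b - a * b"
  shows "(\<integral>\<^sup>+ x. ennreal (normal_density 0 (sqrt a) x * normal_density 0 (sqrt b) x
                               / normal_density 0 1 x) \<partial>lborel)
       = ennreal (1 / sqrt (a + b - a * b))"
proof -
  define w where "w = a + b - a * b"
  have w0: "0 < w"
    using w by (simp add: w_def)
  have s: "0 < sqrt (a * b / w)"
    using a b w0 by simp
  have "(\<integral>\<^sup>+ x. ennreal (normal_density 0 (sqrt a) x * normal_density 0 (sqrt b) x
                         / normal_density 0 1 x) \<partial>lborel)
      = (\<integral>\<^sup>+ x. ennreal (1 / sqrt w) * ennreal (normal_density 0 (sqrt (a * b / w)) x) \<partial>lborel)"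
    using normal_density_mult_divide_standard [OF a b w] w0
    by (intro nn_integral_cong) (simp add: w_def ennreal_mult [symmetric])
  also have "\<dots> = ennreal (1 / sqrt w) * (\<integral>\<^sup>+ x. ennreal (normal_density 0 (sqrt (a * b / w)) x) \<partial>lborel)"
    by (rule nn_integral_cmult) simp
  also have "(\<integral>\<^sup>+ x. ennreal (normal_density 0 (sqrt (a * b / w)) x) \<partial>lborel) = 1"
    using s by (subst nn_integral_eq_integral) auto
  finally show ?thesis
    by (simp add: w_def)
qed

definition gauss_prod_density :: "nat \<Rightarrow> (nat \<Rightarrow> real) \<Rightarrow> (nat \<Rightarrow> real) \<Rightarrow> real" where
  "gauss_prod_density n V y = (\<Prod>i\<in>{1..n}. normal_density 0 (sqrt (V i)) (y i))"

lemma borel_measurable_gauss_prod_density [measurable]: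
  "gauss_prod_density n V \<in> borel_measurable (lborel_sample n)"
  unfolding gauss_prod_density_def [abs_def]
  by (intro borel_measurable_prod) (auto intro!: measurable_compose [OF measurable_component_singleton])

lemma gauss_prod_density_nonneg: "0 \<le> gauss_prod_density n V y"
  unfolding gauss_prod_density_def by (intro prod_nonneg) auto

lemma gauss_prod_density_pos: "(\<And>i. i \<in> {1..n} \<Longrightarrow> 0 < V i) \<Longrightarrow> 0 < gauss_prod_density n V y"
  unfolding gauss_prod_density_def by (intro prod_pos normal_density_pos) auto

lemma data_law_centered_eq_density:
  assumes V: "\<And>i. i \<in> {1..n} \<Longrightarrow> 0 < V i"
  shows "data_law n (\<lambda>_. 0) V = density (lborel_sample n) (gauss_prod_density n V)"
proof -
  have "data_law n (\<lambda>_. 0) V = PiM {1..n} (\<lambda>i. density lborel (normal_density 0 (sqrt (V i))))"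
    unfolding data_law_def using V by (intro PiM_cong refl) (force simp: gauss_def)
  also have "\<dots> = density (lborel_sample n) (\<lambda>y. \<Prod>i\<in>{1..n}. ennreal (normal_density 0 (sqrt (V i)) (y i)))"
    using V by (intro PiM_density_eq_density_prod) (auto intro!: prob_space_normal_density)
  also have "\<dots> = density (lborel_sample n) (gauss_prod_density n V)"
    by (intro density_cong) (auto simp: gauss_prod_density_def prod_ennreal)
  finally show ?thesis .
qed

lemma has_bochner_integral_gauss_prod_density_indicator:
  assumes V: "\<And>i. i \<in> {1..n} \<Longrightarrow> 0 < V i" and A: "A \<in> sets (lborel_sample n)"
  shows "has_bochner_integral (lborel_sample n) (\<lambda>y. gauss_prod_density n V y * indicator A y)
           (measure (data_law n (\<lambda>_. 0) V) A)"
proof -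
  note law = data_law_centered_eq_density [of n V, OF V]
  have "prob_space (density (lborel_sample n) (gauss_prod_density n V))"
    using prob_space_data_law [of n "\<lambda>_. 0" V] by (simp only: law)
  from has_bochner_integral_density_indicator [OF this _ _ A] show ?thesis
    by (simp only: law gauss_prod_density_nonneg borel_measurable_gauss_prod_density)
qed

lemma has_bochner_integral_gauss_prod_density:
  assumes V: "\<And>i. i \<in> {1..n} \<Longrightarrow> 0 < V i"
  shows "has_bochner_integral (lborel_sample n) (gauss_prod_density n V) 1"
proof -
  interpret prob_space "data_law n (\<lambda>_. 0) V"
    by (rule prob_space_data_law)
  have "measure (data_law n (\<lambda>_. 0) V) (space (lborel_sample n)) = 1"
    using prob_space unfolding space_data_law .
  then show ?thesis
    using has_bochner_integral_gauss_prod_density_indicator [of n V, OF V sets.top [of "lborel_sample n"]]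
    by (simp cong: has_bochner_integral_cong)
qed

lemma has_bochner_integral_gauss_prod_density_ratio:
  assumes V: "\<And>i. i \<in> {1..n} \<Longrightarrow> 0 < V i" and W: "\<And>i. i \<in> {1..n} \<Longrightarrow> 0 < W i"
    and VW: "\<And>i. i \<in> {1..n} \<Longrightarrow> 0 < V i + W i - V i * W i"
  shows "has_bochner_integral (lborel_sample n)
           (\<lambda>y. gauss_prod_density n V y * gauss_prod_density n W y / gauss_prod_density n (\<lambda>_. 1) y)
           (\<Prod>i\<in>{1..n}. 1 / sqrt (V i + W i - V i * W i))"
proof (rule has_bochner_integral_nn_integral)
  interpret L: product_sigma_finite "\<lambda>_. lborel :: real measure"
    by (simp add: product_sigma_finite_def lborel.sigma_finite_measure_axioms)
  let ?g = "\<lambda>i x. normal_density 0 (sqrt (V i)) x * normal_density 0 (sqrt (W i)) x / normal_density 0 1 x"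
  have "gauss_prod_density n V y * gauss_prod_density n W y / gauss_prod_density n (\<lambda>_. 1) y
      = (\<Prod>i\<in>{1..n}. ?g i (y i))" for y
    unfolding gauss_prod_density_def by (simp add: prod.distrib [symmetric] prod_dividef [symmetric])
  then have "(\<integral>\<^sup>+ y. ennreal (gauss_prod_density n V y * gauss_prod_density n W y
                               / gauss_prod_density n (\<lambda>_. 1) y) \<partial>lborel_sample n)
      = (\<integral>\<^sup>+ y. (\<Prod>i\<in>{1..n}. ennreal (?g i (y i))) \<partial>lborel_sample n)" (is "?N = _")
    by (intro nn_integral_cong) (simp add: prod_ennreal)
  also have "\<dots> = (\<Prod>i\<in>{1..n}. \<integral>\<^sup>+ x. ennreal (?g i x) \<partial>lborel)"
    by (intro L.product_nn_integral_prod) auto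
  also have "\<dots> = (\<Prod>i\<in>{1..n}. ennreal (1 / sqrt (V i + W i - V i * W i)))"
    using V W VW by (intro prod.cong refl) (simp add: nn_integral_normal_density_mult_divide_standard)
  also have "\<dots> = ennreal (\<Prod>i\<in>{1..n}. 1 / sqrt (V i + W i - V i * W i))"
    using VW by (intro prod_ennreal) (simp add: less_imp_le)
  finally show "?N = ennreal (\<Prod>i\<in>{1..n}. 1 / sqrt (V i + W i - V i * W i))" .
  show "0 \<le> (\<Prod>i\<in>{1..n}. 1 / sqrt (V i + W i - V i * W i))"
    using VW by (intro prod_nonneg) (simp add: less_imp_le)
  show "(\<lambda>y. gauss_prod_density n V y * gauss_prod_density n W y / gauss_prod_density n (\<lambda>_. 1) y)
      \<in> borel_measurable (lborel_sample n)"
    by measurable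
qed (simp add: gauss_prod_density_nonneg)

section \<open>The chi-square bound\<close>

text \<open>The term \<open>q\<^sup>2 / p - 2 q + p\<close> is \<open>(p - q)\<^sup>2 / p\<close>, written so that its integral is visibly
  \<open>\<chi>\<^sup>2 = \<integral> q\<^sup>2 / p - 1\<close>.\<close>
lemma mult_le_add_chi_square_term:
  fixes p q t \<eta> :: real
  assumes p: "0 < p" and \<eta>: "0 < \<eta>" and t: "0 \<le> t" "t \<le> 1"
  shows "p * t \<le> q * t + (\<eta> / 2 * p + (q\<^sup>2 / p - 2 * q + p) / (2 * \<eta>))"
proof -
  have am_gm: "2 * (\<eta> * p) * \<bar>p - q\<bar> \<le> (\<eta> * p)\<^sup>2 + (p - q)\<^sup>2"
    using sum_squares_bound [of "\<eta> * p" "\<bar>p - q\<bar>"] by simp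
  have "(p - q) * t \<le> \<bar>p - q\<bar> * t"
    using t by (intro mult_right_mono) auto
  also have "\<dots> \<le> \<bar>p - q\<bar>"
    using t by (simp add: mult_left_le)
  also have "\<bar>p - q\<bar> \<le> \<eta> / 2 * p + (p - q)\<^sup>2 / (2 * \<eta> * p)"
    using am_gm p \<eta> by (simp add: field_simps power2_eq_square)
  also have "(p - q)\<^sup>2 / (2 * \<eta> * p) = (q\<^sup>2 / p - 2 * q + p) / (2 * \<eta>)"
    using p \<eta> by (simp add: field_simps power2_eq_square)
  finally show ?thesis
    by (simp add: algebra_simps)
qed

lemma integral_indicator_le_chi_square:
  fixes p q :: "'a \<Rightarrow> real"
  assumes p: "has_bochner_integral M p 1" and q: "has_bochner_integral M q 1"
    and chi: "has_bochner_integral M (\<lambda>x. (q x)\<^sup>2 / p x) \<kappa>" and \<kappa>: "\<kappa> \<le> 1 + \<eta>\<^sup>2"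
    and p_pos: "\<And>x. x \<in> space M \<Longrightarrow> 0 < p x" and \<eta>: "0 < \<eta>" and A: "A \<in> sets M"
  shows "(\<integral>x. p x * indicator A x \<partial>M) \<le> (\<integral>x. q x * indicator A x \<partial>M) + \<eta>"
proof -
  define R where "R x = \<eta> / 2 * p x + ((q x)\<^sup>2 / p x - 2 * q x + p x) / (2 * \<eta>)" for x
  have R: "has_bochner_integral M R (\<eta> / 2 + (\<kappa> - 1) / (2 * \<eta>))"
  proof -
    have "has_bochner_integral M R (\<eta> / 2 * 1 + (\<kappa> - 2 * 1 + 1) / (2 * \<eta>))"
      unfolding R_def using p q chi
      by (intro has_bochner_integral_add has_bochner_integral_diff has_bochner_integral_mult_right
          has_bochner_integral_divide_zero)
    then show ?thesis
      by simp
  qed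
  have q_A: "integrable M (\<lambda>x. q x * indicator A x)"
    using A q by (intro integrable_real_mult_indicator) (auto simp: has_bochner_integral_iff)
  have "(\<integral>x. p x * indicator A x \<partial>M) \<le> (\<integral>x. q x * indicator A x + R x \<partial>M)"
    using p R q_A A unfolding R_def
    by (intro integral_mono integrable_real_mult_indicator mult_le_add_chi_square_term p_pos \<eta>)
      (auto simp: has_bochner_integral_iff)
  also have "\<dots> = (\<integral>x. q x * indicator A x \<partial>M) + (\<eta> / 2 + (\<kappa> - 1) / (2 * \<eta>))"
    using q_A R by (simp add: has_bochner_integral_iff)
  also have "(\<kappa> - 1) / (2 * \<eta>) \<le> \<eta> / 2"
    using \<kappa> \<eta> by (simp add: field_simps power2_eq_square)
  finally show ?thesis
    by simp
qed

section \<open>Sign-paired alternatives\<close>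

definition sign_vectors :: "nat \<Rightarrow> (nat \<Rightarrow> real) set" where
  "sign_vectors m = PiE {1..m} (\<lambda>_. {-1, 1})"

lemma card_sign_vectors: "card (sign_vectors m) = 2 ^ m"
  by (simp add: sign_vectors_def card_PiE numeral_2_eq_2)

lemma sign_vectors_values: "s \<in> sign_vectors m \<Longrightarrow> k \<in> {1..m} \<Longrightarrow> s k = -1 \<or> s k = 1"
  by (auto simp: sign_vectors_def)

lemma sum_sign_vectors_prod:
  fixes g :: "real \<Rightarrow> real"
  shows "(\<Sum>s\<in>sign_vectors m. \<Sum>s'\<in>sign_vectors m. \<Prod>k=1..m. g (s k * s' k))
       = (2 * g 1 + 2 * g (-1)) ^ m"
proof -
  have "(2 * g (-1) + 2 * g 1) ^ m = (\<Prod>k=1..m. \<Sum>u\<in>{-1, 1::real}. \<Sum>v\<in>{-1, 1::real}. g (u * v))"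
    by simp
  also have "\<dots> = (\<Sum>s\<in>sign_vectors m. \<Prod>k=1..m. \<Sum>v\<in>{-1, 1::real}. g (s k * v))"
    unfolding sign_vectors_def by (rule prod_sum_PiE) auto
  also have "\<dots> = (\<Sum>s\<in>sign_vectors m. \<Sum>s'\<in>sign_vectors m. \<Prod>k=1..m. g (s k * s' k))"
    unfolding sign_vectors_def by (intro sum.cong refl prod_sum_PiE) auto
  finally show ?thesis
    by (simp add: add.commute)
qed

text \<open>Coordinates \<open>2k - 1\<close> and \<open>2k\<close> carry \<open>-s k\<close> and \<open>s k\<close>; coordinates beyond \<open>2m\<close>
  (one of them when \<open>n = 2m + 1\<close>) carry \<open>0\<close>.\<close>
definition paired_signs :: "nat \<Rightarrow> (nat \<Rightarrow> real) \<Rightarrow> nat \<Rightarrow> real" where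
  "paired_signs m s i = (if i \<le> 2 * m then (-1) ^ i * s ((i + 1) div 2) else 0)"

lemma paired_signs_odd: "k \<in> {1..m} \<Longrightarrow> paired_signs m s (2 * k - 1) = - s k"
  by (auto simp: paired_signs_def)

lemma paired_signs_even: "k \<in> {1..m} \<Longrightarrow> paired_signs m s (2 * k) = s k"
  by (auto simp: paired_signs_def)

lemma abs_paired_signs_le:
  assumes s: "s \<in> sign_vectors m" and i: "1 \<le> i"
  shows "\<bar>paired_signs m s i\<bar> \<le> 1"
proof (cases "i \<le> 2 * m")
  case True
  then have "(i + 1) div 2 \<in> {1..m}"
    using i by auto
  with True show ?thesis
    using sign_vectors_values [OF s] by (force simp: paired_signs_def abs_mult power_abs)
qed (simp add: paired_signs_def)

lemma prod_paired_signs: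
  fixes g :: "real \<Rightarrow> real \<Rightarrow> 'a::comm_monoid_mult"
  assumes "g 0 0 = 1"
  shows "(\<Prod>i=1..n. g (paired_signs (n div 2) s i) (paired_signs (n div 2) s' i))
       = (\<Prod>k=1..n div 2. g (- s k) (- s' k) * g (s k) (s' k))"
proof -
  let ?m = "n div 2"
  let ?G = "\<lambda>i. g (paired_signs ?m s i) (paired_signs ?m s' i)"
  have pairs: "(\<Prod>i=1..2 * j. ?G i) = (\<Prod>k=1..j. ?G (2 * k - 1) * ?G (2 * k))" for j
  proof (induction j)
    case (Suc j)
    have "{1..2 * Suc j} = insert (2 * j + 2) (insert (2 * j + 1) {1..2 * j})"
      by auto
    with Suc show ?case
      by (simp add: ac_simps)
  qed simp
  have "{1..n} = {1..2 * ?m} \<union> {2 * ?m <.. n}"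
    by auto
  then have "(\<Prod>i=1..n. ?G i) = (\<Prod>i=1..2 * ?m. ?G i) * (\<Prod>i\<in>{2 * ?m <.. n}. ?G i)"
    by (simp add: prod.union_disjoint ivl_disj_int)
  also have "(\<Prod>i\<in>{2 * ?m <.. n}. ?G i) = 1"
    using assms by (intro prod.neutral) (simp add: paired_signs_def)
  also have "(\<Prod>i=1..2 * ?m. ?G i) = (\<Prod>k=1..?m. g (- s k) (- s' k) * g (s k) (s' k))"
    unfolding pairs by (intro prod.cong refl) (simp only: paired_signs_odd paired_signs_even)
  finally show ?thesis
    by simp
qed

lemma sum_paired_signs:
  fixes g :: "real \<Rightarrow> 'a::comm_monoid_add"
  assumes "g 0 = 0"
  shows "(\<Sum>i=1..n. g (paired_signs (n div 2) s i)) = (\<Sum>k=1..n div 2. g (- s k) + g (s k))"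
proof -
  let ?m = "n div 2"
  let ?G = "\<lambda>i. g (paired_signs ?m s i)"
  have pairs: "(\<Sum>i=1..2 * j. ?G i) = (\<Sum>k=1..j. ?G (2 * k - 1) + ?G (2 * k))" for j
  proof (induction j)
    case (Suc j)
    have "{1..2 * Suc j} = insert (2 * j + 2) (insert (2 * j + 1) {1..2 * j})"
      by auto
    with Suc show ?case
      by (simp add: ac_simps)
  qed simp
  have "{1..n} = {1..2 * ?m} \<union> {2 * ?m <.. n}"
    by auto
  then have "(\<Sum>i=1..n. ?G i) = (\<Sum>i=1..2 * ?m. ?G i) + (\<Sum>i\<in>{2 * ?m <.. n}. ?G i)"
    by (simp add: sum.union_disjoint ivl_disj_int)
  also have "(\<Sum>i\<in>{2 * ?m <.. n}. ?G i) = 0"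
    using assms by (intro sum.neutral) (simp add: paired_signs_def)
  also have "(\<Sum>i=1..2 * ?m. ?G i) = (\<Sum>k=1..?m. g (- s k) + g (s k))"
    unfolding pairs by (intro sum.cong refl) (simp only: paired_signs_odd paired_signs_even)
  finally show ?thesis
    by simp
qed

definition perturbed_variance :: "nat \<Rightarrow> real \<Rightarrow> (nat \<Rightarrow> real) \<Rightarrow> nat \<Rightarrow> real" where
  "perturbed_variance m \<delta> s i = 1 + \<delta> * paired_signs m s i"

lemma perturbed_variance_pos:
  assumes s: "s \<in> sign_vectors m" and i: "1 \<le> i" and \<delta>: "0 \<le> \<delta>" "\<delta> < 1"
  shows "0 < perturbed_variance m \<delta> s i"
proof -
  have "\<bar>\<delta> * paired_signs m s i\<bar> \<le> \<delta>"
    using abs_paired_signs_le [OF s i] \<delta> by (simp add: abs_mult mult_left_le)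
  then show ?thesis
    using \<delta> by (simp add: perturbed_variance_def abs_le_iff)
qed

lemma perturbed_variance_in_Sigma1:
  assumes s: "s \<in> sign_vectors (n div 2)" and n: "2 \<le> n" and M: "2 \<le> M"
    and \<epsilon>: "0 \<le> \<epsilon>" "2 * \<epsilon> \<le> 1"
  shows "perturbed_variance (n div 2) (2 * \<epsilon>) s \<in> Sigma1 M n \<epsilon>"
proof -
  let ?m = "n div 2"
  let ?V = "perturbed_variance ?m (2 * \<epsilon>) s"
  have range: "?V i \<in> {0..M}" if "i \<in> {1..n}" for i
  proof -
    have "\<bar>2 * \<epsilon> * paired_signs ?m s i\<bar> \<le> 1"
      using abs_paired_signs_le [OF s] that \<epsilon> by (auto simp: abs_mult intro: mult_le_one)
    then show ?thesis
      using M by (auto simp: perturbed_variance_def abs_le_iff)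
  qed
  have "(\<Sum>i=1..n. paired_signs ?m s i) = 0"
    using sum_paired_signs [of "\<lambda>u. u" n s] by simp
  then have mean: "mean_V n ?V = 1"
    using n by (simp add: mean_V_def perturbed_variance_def sum.distrib flip: sum_distrib_left)
  have "(\<Sum>i=1..n. (paired_signs ?m s i)\<^sup>2) = (\<Sum>k=1..?m. (- s k)\<^sup>2 + (s k)\<^sup>2)"
    by (rule sum_paired_signs) simp
  also have "\<dots> = (\<Sum>k=1..?m. 2)"
    using sign_vectors_values [OF s] by (intro sum.cong refl) force
  finally have "(\<Sum>i=1..n. (paired_signs ?m s i)\<^sup>2) = 2 * real ?m"
    by simp
  then have "(\<Sum>i=1..n. (?V i - mean_V n ?V)\<^sup>2) = 8 * \<epsilon>\<^sup>2 * real ?m"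
    unfolding mean by (simp add: perturbed_variance_def power_mult_distrib flip: sum_distrib_left)
  moreover have "\<epsilon>\<^sup>2 * real n \<le> \<epsilon>\<^sup>2 * (8 * real ?m)"
    using n by (intro mult_left_mono) (linarith, simp)
  ultimately have "\<epsilon>\<^sup>2 \<le> (\<Sum>i=1..n. (?V i - mean_V n ?V)\<^sup>2) / real n"
    using n by (simp add: pos_le_divide_eq)
  then have "\<epsilon> \<le> sqrt ((\<Sum>i=1..n. (?V i - mean_V n ?V)\<^sup>2) / real n)"
    using \<epsilon> real_le_rsqrt by blast
  with range show ?thesis
    by (simp add: Sigma1_def)
qed

lemma has_bochner_integral_perturbed_ratio:
  assumes s: "s \<in> sign_vectors (n div 2)" and s': "s' \<in> sign_vectors (n div 2)"
    and \<delta>: "0 \<le> \<delta>" "\<delta> < 1"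
  shows "has_bochner_integral (lborel_sample n)
           (\<lambda>y. gauss_prod_density n (perturbed_variance (n div 2) \<delta> s) y
              * gauss_prod_density n (perturbed_variance (n div 2) \<delta> s') y
              / gauss_prod_density n (\<lambda>_. 1) y)
           (\<Prod>k=1..n div 2. 1 / (1 - \<delta>\<^sup>2 * (s k * s' k)))"
proof -
  let ?m = "n div 2"
  let ?V = "perturbed_variance ?m \<delta> s" and ?W = "perturbed_variance ?m \<delta> s'"
  have cross: "?V i + ?W i - ?V i * ?W i = 1 - \<delta>\<^sup>2 * (paired_signs ?m s i * paired_signs ?m s' i)" for i
    by (simp add: perturbed_variance_def algebra_simps power2_eq_square)
  have cross_pos: "0 < 1 - \<delta>\<^sup>2 * (paired_signs ?m s i * paired_signs ?m s' i)" if "1 \<le> i" for i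
  proof -
    have "\<bar>paired_signs ?m s i * paired_signs ?m s' i\<bar> \<le> 1"
      unfolding abs_mult using abs_paired_signs_le [OF s that] abs_paired_signs_le [OF s' that]
      by (intro mult_le_one) auto
    then have "\<delta>\<^sup>2 * (paired_signs ?m s i * paired_signs ?m s' i) \<le> \<delta>\<^sup>2"
      by (intro mult_left_le) (auto simp: abs_le_iff)
    moreover have "\<delta>\<^sup>2 < 1"
      using \<delta> by (simp add: power_less_one_iff)
    ultimately show ?thesis
      by simp
  qed
  have "has_bochner_integral (lborel_sample n)
      (\<lambda>y. gauss_prod_density n ?V y * gauss_prod_density n ?W y / gauss_prod_density n (\<lambda>_. 1) y)
      (\<Prod>i=1..n. 1 / sqrt (?V i + ?W i - ?V i * ?W i))"
    using perturbed_variance_pos [OF s _ \<delta>] perturbed_variance_pos [OF s' _ \<delta>] cross cross_pos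
    by (intro has_bochner_integral_gauss_prod_density_ratio) auto
  also have "(\<Prod>i=1..n. 1 / sqrt (?V i + ?W i - ?V i * ?W i))
      = (\<Prod>i=1..n. 1 / sqrt (1 - \<delta>\<^sup>2 * (paired_signs ?m s i * paired_signs ?m s' i)))"
    unfolding cross ..
  also have "\<dots> = (\<Prod>k=1..?m. 1 / sqrt (1 - \<delta>\<^sup>2 * (- s k * - s' k)) * (1 / sqrt (1 - \<delta>\<^sup>2 * (s k * s' k))))"
    by (rule prod_paired_signs) simp
  also have "\<dots> = (\<Prod>k=1..?m. 1 / (1 - \<delta>\<^sup>2 * (s k * s' k)))"
  proof (intro prod.cong refl)
    fix k assume k: "k \<in> {1..?m}"
    have "0 < 1 - \<delta>\<^sup>2 * (s k * s' k)"
      using cross_pos [of "2 * k"] k by (simp add: paired_signs_even)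
    then show "1 / sqrt (1 - \<delta>\<^sup>2 * (- s k * - s' k)) * (1 / sqrt (1 - \<delta>\<^sup>2 * (s k * s' k)))
        = 1 / (1 - \<delta>\<^sup>2 * (s k * s' k))"
      by (simp add: real_sqrt_mult [symmetric])
  qed
  finally show ?thesis .
qed

definition mixture_density :: "nat \<Rightarrow> real \<Rightarrow> (nat \<Rightarrow> real) \<Rightarrow> real" where
  "mixture_density n \<delta> y =
     (\<Sum>s\<in>sign_vectors (n div 2). gauss_prod_density n (perturbed_variance (n div 2) \<delta> s) y)
     / 2 ^ (n div 2)"

lemma has_bochner_integral_mixture_density_indicator:
  assumes \<delta>: "0 \<le> \<delta>" "\<delta> < 1" and A: "A \<in> sets (lborel_sample n)"
  shows "has_bochner_integral (lborel_sample n) (\<lambda>y. mixture_density n \<delta> y * indicator A y)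
           ((\<Sum>s\<in>sign_vectors (n div 2).
               measure (data_law n (\<lambda>_. 0) (perturbed_variance (n div 2) \<delta> s)) A) / 2 ^ (n div 2))"
proof -
  have "has_bochner_integral (lborel_sample n)
      (\<lambda>y. (\<Sum>s\<in>sign_vectors (n div 2).
              gauss_prod_density n (perturbed_variance (n div 2) \<delta> s) y * indicator A y) / 2 ^ (n div 2))
      ((\<Sum>s\<in>sign_vectors (n div 2).
          measure (data_law n (\<lambda>_. 0) (perturbed_variance (n div 2) \<delta> s)) A) / 2 ^ (n div 2))"
    using A perturbed_variance_pos [OF _ _ \<delta>]
    by (intro has_bochner_integral_divide_zero has_bochner_integral_sum
        has_bochner_integral_gauss_prod_density_indicator) auto
  then show ?thesis
    by (simp add: mixture_density_def sum_distrib_right)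
qed

lemma has_bochner_integral_mixture_density:
  assumes \<delta>: "0 \<le> \<delta>" "\<delta> < 1"
  shows "has_bochner_integral (lborel_sample n) (mixture_density n \<delta>) 1"
proof -
  have "has_bochner_integral (lborel_sample n) (mixture_density n \<delta>)
      ((\<Sum>s\<in>sign_vectors (n div 2). 1) / 2 ^ (n div 2))"
    unfolding mixture_density_def [abs_def] using perturbed_variance_pos [OF _ _ \<delta>]
    by (intro has_bochner_integral_divide_zero has_bochner_integral_sum
        has_bochner_integral_gauss_prod_density) auto
  then show ?thesis
    by (simp add: card_sign_vectors)
qed

lemma has_bochner_integral_mixture_chi_square:
  assumes \<delta>: "0 \<le> \<delta>" "\<delta> < 1"
  shows "has_bochner_integral (lborel_sample n)
           (\<lambda>y. (mixture_density n \<delta> y)\<^sup>2 / gauss_prod_density n (\<lambda>_. 1) y)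
           ((1 / (1 - \<delta> ^ 4)) ^ (n div 2))"
proof -
  let ?m = "n div 2" and ?S = "sign_vectors (n div 2)"
  let ?p = "\<lambda>s. gauss_prod_density n (perturbed_variance ?m \<delta> s)"
  have "has_bochner_integral (lborel_sample n)
      (\<lambda>y. (\<Sum>s\<in>?S. \<Sum>s'\<in>?S. ?p s y * ?p s' y / gauss_prod_density n (\<lambda>_. 1) y) / 4 ^ ?m)
      ((\<Sum>s\<in>?S. \<Sum>s'\<in>?S. \<Prod>k=1..?m. 1 / (1 - \<delta>\<^sup>2 * (s k * s' k))) / 4 ^ ?m)"
    using \<delta> by (intro has_bochner_integral_divide_zero has_bochner_integral_sum
        has_bochner_integral_perturbed_ratio)
  moreover have "(mixture_density n \<delta> y)\<^sup>2 / gauss_prod_density n (\<lambda>_. 1) y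
      = (\<Sum>s\<in>?S. \<Sum>s'\<in>?S. ?p s y * ?p s' y / gauss_prod_density n (\<lambda>_. 1) y) / 4 ^ ?m" for y
    by (simp add: mixture_density_def power2_eq_square sum_product sum_divide_distrib
        flip: power_mult_distrib) (simp add: mult.commute)
  moreover have "(\<Sum>s\<in>?S. \<Sum>s'\<in>?S. \<Prod>k=1..?m. 1 / (1 - \<delta>\<^sup>2 * (s k * s' k))) / 4 ^ ?m
      = (1 / (1 - \<delta> ^ 4)) ^ ?m"
  proof -
    have pair_sum: "2 * (1 / (1 - u * 1)) + 2 * (1 / (1 - u * - 1)) = 4 * (1 / (1 - u * u))"
      if "0 \<le> u" "u < 1" for u :: real
      using that by (simp add: field_simps)
    have "\<delta> ^ 4 = \<delta>\<^sup>2 * \<delta>\<^sup>2"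
      by (simp add: numeral_eq_Suc)
    then have "2 * (1 / (1 - \<delta>\<^sup>2 * 1)) + 2 * (1 / (1 - \<delta>\<^sup>2 * - 1)) = 4 * (1 / (1 - \<delta> ^ 4))"
      using pair_sum [of "\<delta>\<^sup>2"] \<delta> by (simp add: power_less_one_iff)
    then show ?thesis
      unfolding sum_sign_vectors_prod [where g = "\<lambda>t. 1 / (1 - \<delta>\<^sup>2 * t)"]
      by (simp add: power_divide)
  qed
  ultimately show ?thesis
    by simp
qed

lemma measure_null_le_mixture:
  assumes \<delta>: "0 \<le> \<delta>" "\<delta> < 1" and \<eta>: "0 < \<eta>"
    and chi: "(1 / (1 - \<delta> ^ 4)) ^ (n div 2) \<le> 1 + \<eta>\<^sup>2"
    and A: "A \<in> sets (lborel_sample n)"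
  shows "measure (data_law n (\<lambda>_. 0) (\<lambda>_. 1)) A
     \<le> (\<Sum>s\<in>sign_vectors (n div 2).
           measure (data_law n (\<lambda>_. 0) (perturbed_variance (n div 2) \<delta> s)) A) / 2 ^ (n div 2) + \<eta>"
proof -
  have "measure (data_law n (\<lambda>_. 0) (\<lambda>_. 1)) A
      = (\<integral>y. gauss_prod_density n (\<lambda>_. 1) y * indicator A y \<partial>lborel_sample n)"
    using has_bochner_integral_gauss_prod_density_indicator [of n "\<lambda>_. 1", OF _ A]
    by (simp add: has_bochner_integral_iff)
  also have "\<dots> \<le> (\<integral>y. mixture_density n \<delta> y * indicator A y \<partial>lborel_sample n) + \<eta>"
    by (rule integral_indicator_le_chi_square [OF has_bochner_integral_gauss_prod_density
          has_bochner_integral_mixture_density [OF \<delta>] has_bochner_integral_mixture_chi_square [OF \<delta>]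
          chi _ \<eta> A])
      (simp_all add: gauss_prod_density_pos)
  also have "(\<integral>y. mixture_density n \<delta> y * indicator A y \<partial>lborel_sample n)
      = (\<Sum>s\<in>sign_vectors (n div 2).
           measure (data_law n (\<lambda>_. 0) (perturbed_variance (n div 2) \<delta> s)) A) / 2 ^ (n div 2)"
    using has_bochner_integral_mixture_density_indicator [OF \<delta> A] by (simp add: has_bochner_integral_iff)
  finally show ?thesis .
qed

lemma one_div_one_minus_power_le:
  fixes x :: real
  assumes x: "0 \<le> x" "x < 1" and mx: "real m * x \<le> 1 / 2"
  shows "(1 / (1 - x)) ^ m \<le> 1 + 2 * (real m * x)"
proof -
  define y where "y = real m * x"
  have y: "0 \<le> y" "y \<le> 1 / 2"
    using x mx by (simp_all add: y_def)
  have "1 - y \<le> (1 - x) ^ m"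
    using Bernoulli_inequality [of "- x" m] x by (simp add: y_def)
  then have "(1 / (1 - x)) ^ m \<le> 1 / (1 - y)"
    using y by (simp add: power_one_over divide_left_mono)
  also have "\<dots> \<le> 1 + 2 * y"
  proof -
    have "y * (2 * y) \<le> y * 1"
      using y by (intro mult_left_mono) auto
    then have "1 \<le> (1 + 2 * y) * (1 - y)"
      by (simp add: algebra_simps)
    then show ?thesis
      using y by (simp add: pos_divide_le_eq)
  qed
  finally show ?thesis
    by (simp add: y_def)
qed

lemma perturbation_chi_square_le:
  fixes c \<eta> :: real
  assumes n: "1 \<le> n" and c: "0 \<le> c" "c < 1 / 2" "c \<le> sqrt \<eta> / 2"
  shows "(1 / (1 - (2 * (c * real n powr (-1/4))) ^ 4)) ^ (n div 2) \<le> 1 + \<eta>\<^sup>2"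
proof -
  have "0 \<le> sqrt \<eta>"
    using c by linarith
  then have \<eta>: "0 \<le> \<eta>"
    by simp
  have "(real n powr (-1/4)) ^ 4 = 1 / real n"
    using n by (subst powr_power) (auto simp: powr_minus_divide)
  then have x_eq: "(2 * (c * real n powr (-1/4))) ^ 4 = 16 * c ^ 4 / real n"
    unfolding power_mult_distrib by simp
  have "c ^ 4 \<le> (sqrt \<eta> / 2) ^ 4"
    using c by (intro power_mono) auto
  also have "(sqrt \<eta> / 2) ^ 4 = ((sqrt \<eta>)\<^sup>2)\<^sup>2 / 16"
    by (simp add: power_divide flip: power_mult)
  also have "\<dots> = \<eta>\<^sup>2 / 16"
    using \<eta> by simp
  finally have c4_le: "16 * c ^ 4 \<le> \<eta>\<^sup>2"
    by simp
  have "c ^ 4 < (1 / 2) ^ 4"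
    using c by (intro power_strict_mono) auto
  then have c4_small: "16 * c ^ 4 < 1"
    by (simp add: power_divide)
  have mx: "real (n div 2) * (16 * c ^ 4 / real n) \<le> 8 * c ^ 4"
  proof -
    have "real (n div 2) * (16 * c ^ 4 / real n) \<le> real n / 2 * (16 * c ^ 4 / real n)"
      using c by (intro mult_right_mono) (linarith, simp)
    then show ?thesis
      using n by simp
  qed
  have "(1 / (1 - 16 * c ^ 4 / real n)) ^ (n div 2) \<le> 1 + 2 * (real (n div 2) * (16 * c ^ 4 / real n))"
  proof (rule one_div_one_minus_power_le)
    show "0 \<le> 16 * c ^ 4 / real n" and "16 * c ^ 4 / real n < 1"
      using n c c4_small by (auto simp: divide_less_eq)
    show "real (n div 2) * (16 * c ^ 4 / real n) \<le> 1 / 2"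
      using mx c4_small by linarith
  qed
  also have "\<dots> \<le> 1 + \<eta>\<^sup>2"
    using mx c4_le by simp
  finally show ?thesis
    unfolding x_eq .
qed

lemma zero_in_holder_class: "0 \<le> M \<Longrightarrow> (\<lambda>_. 0) \<in> holder_class \<alpha> M"
  unfolding holder_class_def by (intro CollectI exI [of _ "\<lambda>_ _. 0"]) auto

lemma prob_test_le_SUP:
  assumes "p \<in> X"
  shows "prob_test n (fst p) (snd p) \<phi> b \<le> (SUP p\<in>X. prob_test n (fst p) (snd p) \<phi> b)"
proof (rule cSUP_upper [OF assms bdd_aboveI])
  fix x assume "x \<in> (\<lambda>p. prob_test n (fst p) (snd p) \<phi> b) ` X"
  then show "x \<le> 1"
    using prob_space.prob_le_1 [OF prob_space_data_law] by (auto simp: prob_test_def)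
qed

lemma prob_test_one_eq:
  assumes "is_test n \<phi>"
  shows "prob_test n f V \<phi> 1 = 1 - prob_test n f V \<phi> 0"
proof -
  interpret prob_space "data_law n f V"
    by (rule prob_space_data_law)
  have [measurable]: "\<phi> \<in> borel_measurable (lborel_sample n)"
    using assms by (simp add: is_test_def)
  have "{y \<in> space (lborel_sample n). \<phi> y = 0} \<in> sets (lborel_sample n)"
    by measurable
  then have "{y \<in> space (data_law n f V). \<phi> y = 0} \<in> events"
    by (simp only: sets_data_law space_data_law)
  moreover have "{y \<in> space (data_law n f V). \<phi> y = 1}
      = space (data_law n f V) - {y \<in> space (data_law n f V). \<phi> y = 0}"
    using assms by (auto simp: is_test_def)
  ultimately show ?thesis
    unfolding prob_test_def by (simp add: prob_compl)
qed

lemma average_prob_test_perturbed_le_SUP: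
  assumes n: "2 \<le> n" and M: "2 \<le> M" and \<epsilon>: "0 \<le> \<epsilon>" "2 * \<epsilon> \<le> 1"
  shows "(\<Sum>s\<in>sign_vectors (n div 2).
            prob_test n (\<lambda>_. 0) (perturbed_variance (n div 2) (2 * \<epsilon>) s) \<phi> 0) / 2 ^ (n div 2)
       \<le> (SUP p\<in>holder_class \<alpha> M \<times> Sigma1 M n \<epsilon>. prob_test n (fst p) (snd p) \<phi> 0)"
    (is "(\<Sum>s\<in>?S. ?P s) / _ \<le> ?alt")
proof -
  have "?P s \<le> ?alt" if "s \<in> ?S" for s
    using prob_test_le_SUP [of "((\<lambda>_. 0), perturbed_variance (n div 2) (2 * \<epsilon>) s)"]
      zero_in_holder_class perturbed_variance_in_Sigma1 [OF that n M \<epsilon>] M by simp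
  then have "(\<Sum>s\<in>?S. ?P s) \<le> of_nat (card ?S) * ?alt"
    by (rule sum_bounded_above)
  then show ?thesis
    by (simp add: card_sign_vectors field_simps)
qed

lemma sum_SUP_prob_test_ge:
  assumes n: "2 \<le> n" and M: "2 \<le> M" and \<eta>: "0 < \<eta>" "\<eta> \<le> 1"
    and c: "0 < c" "c < sqrt \<eta> / 2" and \<phi>: "is_test n \<phi>"
  shows "1 - \<eta> \<le> (SUP p\<in>holder_class \<alpha> M \<times> Sigma0 M n. prob_test n (fst p) (snd p) \<phi> 1)
                 + (SUP p\<in>holder_class \<alpha> M \<times> Sigma1 M n (c * real n powr (-1/4)).
                      prob_test n (fst p) (snd p) \<phi> 0)"
    (is "_ \<le> ?null + ?alt")
proof -
  define \<epsilon> where "\<epsilon> = c * real n powr (-1/4)"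
  let ?m = "n div 2"
  let ?P = "\<lambda>V. prob_test n (\<lambda>_. 0) V \<phi> 0"
  have "sqrt \<eta> \<le> 1"
    using \<eta> by simp
  then have c_half: "c < 1 / 2"
    using c by linarith
  have "real n powr (-1/4) \<le> 1"
    using powr_mono [of "-1/4" 0 "real n"] n by simp
  then have "c * real n powr (-1/4) \<le> c"
    using c by (intro mult_left_le) auto
  then have \<epsilon>: "0 \<le> \<epsilon>" "2 * \<epsilon> < 1"
    using c c_half unfolding \<epsilon>_def by (simp, linarith)
  have "((\<lambda>_. 0), (\<lambda>_. 1)) \<in> holder_class \<alpha> M \<times> Sigma0 M n"
    using zero_in_holder_class M by (auto simp: Sigma0_def)
  from prob_test_le_SUP [OF this, of n \<phi> 1]
  have "1 - ?P (\<lambda>_. 1) \<le> ?null"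
    using prob_test_one_eq [OF \<phi>, of "\<lambda>_. 0" "\<lambda>_. 1"] by simp
  moreover have "?P (\<lambda>_. 1)
      \<le> (\<Sum>s\<in>sign_vectors ?m. ?P (perturbed_variance ?m (2 * \<epsilon>) s)) / 2 ^ ?m + \<eta>"
  proof -
    have [measurable]: "\<phi> \<in> borel_measurable (lborel_sample n)"
      using \<phi> by (simp add: is_test_def)
    have "(1 / (1 - (2 * \<epsilon>) ^ 4)) ^ ?m \<le> 1 + \<eta>\<^sup>2"
      unfolding \<epsilon>_def using n c c_half by (intro perturbation_chi_square_le) auto
    moreover have "{y \<in> space (lborel_sample n). \<phi> y = 0} \<in> sets (lborel_sample n)"
      by measurable
    ultimately show ?thesis
      using measure_null_le_mixture [OF _ _ \<eta>(1)] \<epsilon> by (simp add: prob_test_def space_data_law)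
  qed
  moreover have "(\<Sum>s\<in>sign_vectors ?m. ?P (perturbed_variance ?m (2 * \<epsilon>) s)) / 2 ^ ?m \<le> ?alt"
    unfolding \<epsilon>_def [symmetric] using n M \<epsilon> by (intro average_prob_test_perturbed_le_SUP) auto
  ultimately show ?thesis
    by linarith
qed

theorem theorem4p7:
  fixes \<alpha> :: real
  assumes "\<alpha> > 0"
  shows "\<exists>M0. \<forall>M \<ge> M0. \<forall>\<eta>::real. 0 < \<eta> \<and> \<eta> < 1 \<longrightarrow>
     (\<exists>c\<eta> > 0. \<exists>N::nat. \<forall>c::real. \<forall>n::nat. 0 < c \<and> c < c\<eta> \<and> n \<ge> N \<longrightarrow>
        (\<forall>\<phi>. is_test n \<phi> \<longrightarrow>
           (SUP p \<in> holder_class \<alpha> M \<times> Sigma0 M n. prob_test n (fst p) (snd p) \<phi> 1)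
         + (SUP p \<in> holder_class \<alpha> M \<times> Sigma1 M n (c * real n powr (-1/4)).
              prob_test n (fst p) (snd p) \<phi> 0)
         \<ge> 1 - \<eta>))"
  apply (rule exI [of _ 2], intro allI impI)
  subgoal for M \<eta>
    by (intro exI [of _ "sqrt \<eta> / 2"] conjI exI [of _ "2 :: nat"] allI impI sum_SUP_prob_test_ge)
      auto
  done

end
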